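(* Let $K\subset\mathbb R^d$ be compact and let $\Delta$ be a family of Borel probability measures supported in $K$ having uniform densities. Suppose $t\in\mathbb R$ is such that for every $x\in K$ there is $\mu_x\in\Delta$ with $$\liminf_{r\to0}\frac{\log\mu_x(B(x,r))}{\log r}\le t.$$ Then $\dim_{\mathrm H}K\le t$.
   Context: Definition: for a compact set $K\subset\mathbb R^d$, a set $\Delta$ of Borel probability measures each supported in $K$ has uniform densities if for every $\epsilon>0$ there exist a set $\mathcal E$ of Borel measures on $\mathbb R^d$ with $\sum_{\nu\in\mathcal E}\nu(\mathbb R^d)<\infty$ and a constant $\eta>0$ such that for all $\mu\in\Delta$, $r\in(0,\eta)$ and $x\in K$ there is $\nu\in\mathcal E$ with $\frac{\log\nu(B(x,r))}{\log r}\le\frac{\log\mu(B(x,r))}{\log r}+\epsilon$ (equivalently $r^\epsilon\mu(B(x,r))\le\nu(B(x,r))$). *)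

theory Defs
  imports "HOL-Probability.Probability"
begin

definition borel_prob_supported_in :: "'a::euclidean_space set \<Rightarrow> 'a measure \<Rightarrow> bool" where
  "borel_prob_supported_in K \<mu> \<longleftrightarrow>
     sets \<mu> = sets borel \<and> prob_space \<mu> \<and> emeasure \<mu> (UNIV - K) = 0"

text \<open>Uniform densities (equivalent multiplicative form of the definition).
  The total mass of the (possibly infinite) family E is the supremum of its finite partial sums.\<close>
definition uniform_densities :: "'a::euclidean_space set \<Rightarrow> 'a measure set \<Rightarrow> bool" where
  "uniform_densities K \<Delta> \<longleftrightarrow>
     (\<forall>\<mu>\<in>\<Delta>. borel_prob_supported_in K \<mu>) \<and>
     (\<forall>\<epsilon>>0. \<exists>E :: 'a measure set. \<exists>\<eta>>0.
        (\<forall>\<nu>\<in>E. sets \<nu> = sets borel) \<and>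
        (SUP F\<in>{F. finite F \<and> F \<subseteq> E}. \<Sum>\<nu>\<in>F. emeasure \<nu> UNIV) < \<infinity> \<and>
        (\<forall>\<mu>\<in>\<Delta>. \<forall>r. 0 < r \<and> r < \<eta> \<longrightarrow> (\<forall>x\<in>K. \<exists>\<nu>\<in>E.
            ennreal (r powr \<epsilon>) * emeasure \<mu> (ball x r) \<le> emeasure \<nu> (ball x r))))"

text \<open>Lower local dimension: liminf as r \<rightarrow> 0+ of log mu(B(x,r)) / log r,
  with the convention log 0 / log r = +\<infinity> (for 0<r<1).\<close>
definition lower_local_dim :: "'a::euclidean_space measure \<Rightarrow> 'a \<Rightarrow> ereal" where
  "lower_local_dim \<mu> x = Liminf (at_right 0)
     (\<lambda>r. if measure \<mu> (ball x r) = 0 then \<infinity>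
          else ereal (ln (measure \<mu> (ball x r)) / ln r))"

definition hausdorff_pre :: "real \<Rightarrow> real \<Rightarrow> 'a::metric_space set \<Rightarrow> ennreal" where
  "hausdorff_pre s \<delta> A = (INF U\<in>{U :: nat \<Rightarrow> 'a set. A \<subseteq> (\<Union>i. U i) \<and>
        (\<forall>i. bounded (U i) \<and> diameter (U i) \<le> \<delta>)}.
      (\<Sum>i. ennreal (diameter (U i) powr s)))"

definition hausdorff_measure :: "real \<Rightarrow> 'a::metric_space set \<Rightarrow> ennreal" where
  "hausdorff_measure s A = (SUP \<delta>\<in>{0<..}. hausdorff_pre s \<delta> A)"

definition hausdorff_dim :: "'a::metric_space set \<Rightarrow> ereal" where
  "hausdorff_dim A = Inf {ereal s | s. 0 \<le> s \<and> hausdorff_measure s A = 0}"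

end

theory Submission
  imports Defs
begin

text \<open>Fix \<open>s > t\<close> and write \<open>s - t = 3\<epsilon>\<close>. Around every \<open>x \<in> K\<close> the bound on the lower local
  dimension gives arbitrarily small radii \<open>r\<close> with \<open>\<mu>\<^sub>x(B(x,r)) \<ge> r^(t+\<epsilon>)\<close>, and the uniform
  density property moves this mass to some \<open>\<nu> \<in> E\<close>: \<open>\<nu>(B(x,r)) \<ge> r^(t+2\<epsilon>)\<close>. By compactness
  and the Vitali covering lemma, finitely many pairwise disjoint such balls of radius \<open>< \<rho>\<close>,
  enlarged five times, cover \<open>K\<close>. Their \<open>s\<close>-dimensional cover sum is then at most
  \<open>10^s \<rho>^\<epsilon> \<Sum> \<nu>(B) \<le> 10^s \<rho>^\<epsilon> \<Sum>\<nu>\<in>E. \<nu>(\<real>^d)\<close>, which tends to \<open>0\<close> with \<open>\<rho>\<close>.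
  Hence \<open>H^s(K) = 0\<close> for every \<open>s > t\<close>.\<close>

definition total_mass :: "'a measure set \<Rightarrow> ennreal" where
  "total_mass E = (SUP F\<in>{F. finite F \<and> F \<subseteq> E}. \<Sum>\<nu>\<in>F. emeasure \<nu> UNIV)"

lemma hausdorff_pre_le_finite_ball_cover:
  fixes K :: "'a::euclidean_space set"
  assumes fin: "finite C" and "0 \<le> \<delta>"
    and radius: "\<And>x. x \<in> C \<Longrightarrow> 0 < r x \<and> 2 * r x \<le> \<delta>"
    and cover: "K \<subseteq> (\<Union>x\<in>C. ball x (r x))"
  shows "hausdorff_pre s \<delta> K \<le> (\<Sum>x\<in>C. ennreal ((2 * r x) powr s))"
proof -
  obtain h where h: "bij_betw h {0..<card C} C"
    using ex_bij_betw_nat_finite[OF fin] by blast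
  then have hC: "h i \<in> C" if "i < card C" for i
    using that by (auto simp: bij_betw_def)
  define U where "U i = (if i < card C then ball (h i) (r (h i)) else {})" for i
  have "K \<subseteq> (\<Union>i. U i)"
  proof
    fix y assume "y \<in> K"
    then obtain x where x: "x \<in> C" "y \<in> ball x (r x)" using cover by blast
    then obtain i where "i < card C" "h i = x" using h by (metis atLeastLessThan_iff bij_betw_iff_bijections)
    then show "y \<in> (\<Union>i. U i)" using x by (auto simp: U_def)
  qed
  moreover have "bounded (U i) \<and> diameter (U i) \<le> \<delta>" for i
  proof (cases "i < card C")
    case True
    then show ?thesis using hC radius[of "h i"] by (auto simp: U_def)
  qed (use \<open>0 \<le> \<delta>\<close> in \<open>auto simp: U_def\<close>)
  ultimately have "hausdorff_pre s \<delta> K \<le> (\<Sum>i. ennreal (diameter (U i) powr s))"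
    unfolding hausdorff_pre_def by (intro INF_lower) auto
  also have "\<dots> = (\<Sum>i\<in>{0..<card C}. ennreal (diameter (U i) powr s))"
    by (rule suminf_finite) (auto simp: U_def)
  also have "\<dots> = (\<Sum>i\<in>{0..<card C}. ennreal ((2 * r (h i)) powr s))"
  proof (rule sum.cong)
    fix i assume "i \<in> {0..<card C}"
    with radius[OF hC[of i]]
    show "ennreal (diameter (U i) powr s) = ennreal ((2 * r (h i)) powr s)" by (simp add: U_def)
  qed simp
  also have "\<dots> = (\<Sum>x\<in>C. ennreal ((2 * r x) powr s))"
    by (rule sum.reindex_bij_betw[OF h])
  finally show ?thesis .
qed

lemma sum_emeasure_disjoint_le_total_mass:
  assumes fin: "finite C" and in_E: "\<And>x. x \<in> C \<Longrightarrow> \<nu> x \<in> E"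
    and sets_E: "\<And>\<nu>. \<nu> \<in> E \<Longrightarrow> sets \<nu> = sets borel"
    and borel_A: "\<And>x. x \<in> C \<Longrightarrow> A x \<in> sets borel" and disj: "disjoint_family_on A C"
  shows "(\<Sum>x\<in>C. emeasure (\<nu> x) (A x)) \<le> total_mass E"
proof -
  have "(\<Sum>x\<in>C. emeasure (\<nu> x) (A x)) = (\<Sum>\<mu>\<in>\<nu> ` C. \<Sum>x\<in>{x\<in>C. \<nu> x = \<mu>}. emeasure \<mu> (A x))"
    by (simp add: sum.image_gen[OF fin, where g=\<nu>])
  also have "\<dots> \<le> (\<Sum>\<mu>\<in>\<nu> ` C. emeasure \<mu> UNIV)"
  proof (rule sum_mono)
    fix \<mu> assume "\<mu> \<in> \<nu> ` C"
    then have sets_\<mu>: "sets \<mu> = sets borel" using in_E sets_E by blast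
    have "A ` {x\<in>C. \<nu> x = \<mu>} \<subseteq> sets \<mu>"
      using borel_A unfolding sets_\<mu> by blast
    then have "(\<Sum>x\<in>{x\<in>C. \<nu> x = \<mu>}. emeasure \<mu> (A x)) = emeasure \<mu> (\<Union>x\<in>{x\<in>C. \<nu> x = \<mu>}. A x)"
      using fin disj by (intro sum_emeasure) (auto simp: disjoint_family_on_def)
    also have "\<dots> \<le> emeasure \<mu> UNIV"
      using emeasure_space[of \<mu>] sets_eq_imp_space_eq[OF sets_\<mu>] by simp
    finally show "(\<Sum>x\<in>{x\<in>C. \<nu> x = \<mu>}. emeasure \<mu> (A x)) \<le> emeasure \<mu> UNIV" .
  qed
  also have "\<dots> \<le> total_mass E"
    unfolding total_mass_def using fin in_E by (intro SUP_upper) auto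
  finally show ?thesis .
qed

lemma lower_local_dim_nonneg:
  assumes "prob_space \<mu>"
  shows "0 \<le> lower_local_dim \<mu> x"
  unfolding lower_local_dim_def le_Liminf_iff
proof (intro allI impI)
  fix y :: ereal assume "y < 0"
  have "eventually (\<lambda>r. 0 < r \<and> r < 1) (at_right (0::real))"
    using eventually_at_right_real[of 0 "1::real"] by (rule eventually_mono) auto
  then show "\<forall>\<^sub>F r in at_right 0. y < (if measure \<mu> (ball x r) = 0 then \<infinity>
          else ereal (ln (measure \<mu> (ball x r)) / ln r))"
  proof (rule eventually_mono)
    fix r :: real assume r: "0 < r \<and> r < 1"
    have "measure \<mu> (ball x r) \<le> 1" using prob_space.prob_le_1[OF assms] .
    then have "measure \<mu> (ball x r) \<noteq> 0 \<Longrightarrow> 0 \<le> ln (measure \<mu> (ball x r)) / ln r"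
      using r by (intro divide_nonpos_neg) (simp_all add: zero_less_measure_iff)
    then show "y < (if measure \<mu> (ball x r) = 0 then \<infinity>
          else ereal (ln (measure \<mu> (ball x r)) / ln r))"
      using \<open>y < 0\<close> by (auto intro: less_le_trans)
  qed
qed

lemma lower_local_dim_less_imp_ball_ge_powr:
  assumes "lower_local_dim \<mu> x < ereal d" and "0 < \<rho>" and "\<rho> \<le> 1"
  shows "\<exists>r. 0 < r \<and> r < \<rho> \<and> r powr d \<le> measure \<mu> (ball x r)"
proof -
  define f where "f r = (if measure \<mu> (ball x r) = 0 then \<infinity>
          else ereal (ln (measure \<mu> (ball x r)) / ln r))" for r :: real
  have "\<not> ereal d \<le> Liminf (at_right 0) f"
    using assms(1) unfolding lower_local_dim_def f_def by simp
  then obtain y where y: "y < ereal d" "\<not> eventually (\<lambda>r. y < f r) (at_right 0)"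
    unfolding le_Liminf_iff by auto
  have "eventually (\<lambda>r. 0 < r \<and> r < \<rho>) (at_right (0::real))"
    using eventually_at_right_real[OF \<open>0 < \<rho>\<close>] by (rule eventually_mono) auto
  then have "\<not> eventually (\<lambda>r. (0 < r \<and> r < \<rho>) \<longrightarrow> y < f r) (at_right 0)"
    using y(2) by (rule not_eventually_impI)
  then obtain r where r: "0 < r" "r < \<rho>" "f r < ereal d"
    using y(1) not_eventuallyD by force
  then have pos: "0 < measure \<mu> (ball x r)"
    by (auto simp: f_def zero_less_measure_iff split: if_splits)
  have "ln r < 0" using r \<open>\<rho> \<le> 1\<close> by simp
  then have "d * ln r < ln (measure \<mu> (ball x r))"
    using r(3) pos by (simp add: f_def divide_less_eq mult.commute)
  then have "r powr d < measure \<mu> (ball x r)"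
    using pos r(1) by (metis exp_less_cancel_iff exp_ln powr_def)
  then show ?thesis using r by auto
qed

lemma uniform_density_ball_witness:
  assumes "prob_space \<mu>" and "lower_local_dim \<mu> x < ereal d"
    and dens: "\<And>r. 0 < r \<Longrightarrow> r < \<eta> \<Longrightarrow>
        \<exists>\<nu>\<in>E. ennreal (r powr \<epsilon>) * emeasure \<mu> (ball x r) \<le> emeasure \<nu> (ball x r)"
    and "0 < \<rho>" and "\<rho> \<le> 1" and "\<rho> \<le> \<eta>"
  shows "\<exists>r \<nu>. 0 < r \<and> r < \<rho> \<and> \<nu> \<in> E \<and> ennreal (r powr (d + \<epsilon>)) \<le> emeasure \<nu> (ball x r)"
proof -
  obtain r where r: "0 < r" "r < \<rho>" "r powr d \<le> measure \<mu> (ball x r)"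
    using lower_local_dim_less_imp_ball_ge_powr assms(2,4,5) by blast
  obtain \<nu> where \<nu>: "\<nu> \<in> E" "ennreal (r powr \<epsilon>) * emeasure \<mu> (ball x r) \<le> emeasure \<nu> (ball x r)"
    using dens r \<open>\<rho> \<le> \<eta>\<close> by fastforce
  have "r powr (d + \<epsilon>) \<le> r powr \<epsilon> * measure \<mu> (ball x r)"
    using r by (simp add: powr_add mult.commute mult_left_mono)
  moreover have "emeasure \<mu> (ball x r) = ennreal (measure \<mu> (ball x r))"
    using prob_space.finite_measure[OF assms(1)] by (rule finite_measure.emeasure_eq_measure)
  ultimately have "ennreal (r powr (d + \<epsilon>)) \<le> ennreal (r powr \<epsilon>) * emeasure \<mu> (ball x r)"
    by (simp add: ennreal_mult'[symmetric] ennreal_leI)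
  then show ?thesis using r \<nu> order_trans by blast
qed

lemma hausdorff_pre_le_total_mass:
  fixes K :: "'a::euclidean_space set"
  assumes "compact K" and sets_E: "\<And>\<nu>. \<nu> \<in> E \<Longrightarrow> sets \<nu> = sets borel"
    and "0 < \<rho>" and "10 * \<rho> \<le> \<delta>" and "a \<le> s"
    and witness: "\<And>x. x \<in> K \<Longrightarrow>
        \<exists>r \<nu>. 0 < r \<and> r < \<rho> \<and> \<nu> \<in> E \<and> ennreal (r powr a) \<le> emeasure \<nu> (ball x r)"
  shows "hausdorff_pre s \<delta> K \<le> ennreal (10 powr s * \<rho> powr (s - a)) * total_mass E"
proof -
  have "\<forall>x\<in>K. \<exists>r \<nu>. 0 < r \<and> r < \<rho> \<and> \<nu> \<in> E \<and> ennreal (r powr a) \<le> emeasure \<nu> (ball x r)"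
    using witness by blast
  then obtain R \<nu> where R\<nu>: "\<And>x. x \<in> K \<Longrightarrow>
      0 < R x \<and> R x < \<rho> \<and> \<nu> x \<in> E \<and> ennreal (R x powr a) \<le> emeasure (\<nu> x) (ball x (R x))"
    by metis
  have "K \<subseteq> (\<Union>x\<in>K. ball x (R x))"
    using R\<nu> centre_in_ball by blast
  then obtain F where F: "F \<subseteq> K" "finite F" "K \<subseteq> (\<Union>x\<in>F. ball x (R x))"
    using compactE_image[OF \<open>compact K\<close>, of K "\<lambda>x. ball x (R x)"] by blast
  have radius: "0 < R x \<and> R x \<le> \<rho>" if "x \<in> F" for x
    using R\<nu> F(1) that by (meson less_imp_le subsetD)
  obtain C where C: "C \<subseteq> F" "pairwise (\<lambda>i j. disjnt (ball i (R i)) (ball j (R j))) C"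
      "K \<subseteq> (\<Union>x\<in>C. ball x (5 * R x))"
    by (rule Vitali_covering_lemma_balls[where a="\<lambda>x. x", OF F(3) radius])
  have fin: "finite C" and CK: "C \<subseteq> K" using C(1) F by (auto intro: finite_subset)
  have "0 < 5 * R x \<and> 2 * (5 * R x) \<le> \<delta>" if "x \<in> C" for x
    using R\<nu>[of x] CK that \<open>10 * \<rho> \<le> \<delta>\<close> by auto
  then have "hausdorff_pre s \<delta> K \<le> (\<Sum>x\<in>C. ennreal ((2 * (5 * R x)) powr s))"
    using C(3) \<open>0 < \<rho>\<close> \<open>10 * \<rho> \<le> \<delta>\<close> by (intro hausdorff_pre_le_finite_ball_cover[OF fin]) auto
  also have "\<dots> \<le> (\<Sum>x\<in>C. ennreal (10 powr s * \<rho> powr (s - a)) * emeasure (\<nu> x) (ball x (R x)))"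
  proof (rule sum_mono)
    fix x assume "x \<in> C"
    then have x: "0 < R x" "R x < \<rho>" "ennreal (R x powr a) \<le> emeasure (\<nu> x) (ball x (R x))"
      using R\<nu> CK by auto
    have "(2 * (5 * R x)) powr s = 10 powr s * (R x powr (s - a) * R x powr a)"
      using x(1) by (simp add: powr_mult powr_add[symmetric])
    also have "\<dots> \<le> 10 powr s * (\<rho> powr (s - a) * R x powr a)"
      using x \<open>a \<le> s\<close> by (intro mult_left_mono mult_right_mono powr_mono2) auto
    finally have "ennreal ((2 * (5 * R x)) powr s) \<le> ennreal (10 powr s * \<rho> powr (s - a) * R x powr a)"
      by (intro ennreal_leI) (simp add: mult.assoc)
    also have "\<dots> = ennreal (10 powr s * \<rho> powr (s - a)) * ennreal (R x powr a)"
      by (rule ennreal_mult) auto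
    also have "\<dots> \<le> ennreal (10 powr s * \<rho> powr (s - a)) * emeasure (\<nu> x) (ball x (R x))"
      using x(3) by (rule mult_left_mono) simp
    finally show "ennreal ((2 * (5 * R x)) powr s)
        \<le> ennreal (10 powr s * \<rho> powr (s - a)) * emeasure (\<nu> x) (ball x (R x))" .
  qed
  also have "\<dots> = ennreal (10 powr s * \<rho> powr (s - a)) * (\<Sum>x\<in>C. emeasure (\<nu> x) (ball x (R x)))"
    by (simp add: sum_distrib_left)
  also have "\<dots> \<le> ennreal (10 powr s * \<rho> powr (s - a)) * total_mass E"
    using R\<nu> CK sets_E C(2)
    by (intro mult_left_mono sum_emeasure_disjoint_le_total_mass[OF fin])
       (auto simp: disjoint_family_on_def pairwise_def disjnt_def)
  finally show ?thesis .
qed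

lemma ennreal_eq_0_if_le_powr:
  assumes "0 < \<epsilon>" and "0 < \<rho>\<^sub>0"
    and bound: "\<And>\<rho>. 0 < \<rho> \<Longrightarrow> \<rho> \<le> \<rho>\<^sub>0 \<Longrightarrow> x \<le> ennreal (c * \<rho> powr \<epsilon>)"
  shows "x = (0::ennreal)"
proof -
  have "((\<lambda>\<rho>. c * \<rho> powr \<epsilon>) \<longlongrightarrow> c * 0) (at_right 0)"
    using \<open>0 < \<epsilon>\<close>
    by (intro tendsto_intros tendsto_zero_powrI[OF tendsto_ident_at]) (auto simp: eventually_at_filter)
  then have "((\<lambda>\<rho>. ennreal (c * \<rho> powr \<epsilon>)) \<longlongrightarrow> 0) (at_right 0)"
    using tendsto_ennrealI by fastforce
  moreover have "eventually (\<lambda>\<rho>. 0 < \<rho> \<and> \<rho> \<le> \<rho>\<^sub>0) (at_right 0)"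
    using eventually_at_right_real[OF \<open>0 < \<rho>\<^sub>0\<close>] by (rule eventually_mono) auto
  then have "eventually (\<lambda>\<rho>. x \<le> ennreal (c * \<rho> powr \<epsilon>)) (at_right 0)"
    by (rule eventually_mono) (use bound in blast)
  ultimately have "x \<le> 0"
    using tendsto_le[OF trivial_limit_at_right_real _ tendsto_const] by blast
  then show ?thesis by simp
qed

lemma hausdorff_pre_eq_0_above_local_dim:
  fixes K :: "'a::euclidean_space set"
  assumes "compact K" and ud: "uniform_densities K \<Delta>"
    and local_dim: "\<forall>x\<in>K. \<exists>\<mu>\<in>\<Delta>. lower_local_dim \<mu> x \<le> ereal t"
    and "t < s" and "0 < \<delta>"
  shows "hausdorff_pre s \<delta> K = 0"
proof -
  define \<epsilon> where "\<epsilon> = (s - t) / 3"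
  have "0 < \<epsilon>" using \<open>t < s\<close> by (simp add: \<epsilon>_def)
  then obtain E \<eta> where "0 < \<eta>" and sets_E: "\<forall>\<nu>\<in>E. sets \<nu> = sets borel"
    and "total_mass E < \<infinity>"
    and dens: "\<forall>\<mu>\<in>\<Delta>. \<forall>r. 0 < r \<and> r < \<eta> \<longrightarrow> (\<forall>x\<in>K. \<exists>\<nu>\<in>E.
        ennreal (r powr \<epsilon>) * emeasure \<mu> (ball x r) \<le> emeasure \<nu> (ball x r))"
    using ud unfolding uniform_densities_def total_mass_def by blast
  then obtain m where m: "total_mass E = ennreal m" "0 \<le> m"
    by (cases "total_mass E") auto
  have prob: "prob_space \<mu>" if "\<mu> \<in> \<Delta>" for \<mu>
    using ud that by (auto simp: uniform_densities_def borel_prob_supported_in_def)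
  define \<rho>\<^sub>0 where "\<rho>\<^sub>0 = min 1 (min \<eta> (\<delta> / 10))"
  have "0 < \<rho>\<^sub>0" using \<open>0 < \<eta>\<close> \<open>0 < \<delta>\<close> by (simp add: \<rho>\<^sub>0_def)
  have bound: "hausdorff_pre s \<delta> K \<le> ennreal (10 powr s * m * \<rho> powr \<epsilon>)"
    if "0 < \<rho>" "\<rho> \<le> \<rho>\<^sub>0" for \<rho>
  proof -
    have "hausdorff_pre s \<delta> K \<le> ennreal (10 powr s * \<rho> powr (s - (t + \<epsilon> + \<epsilon>))) * total_mass E"
    proof (rule hausdorff_pre_le_total_mass[OF \<open>compact K\<close>])
      fix x assume "x \<in> K"
      then obtain \<mu> where "\<mu> \<in> \<Delta>" "lower_local_dim \<mu> x \<le> ereal t"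
        using local_dim by blast
      moreover have "ereal t < ereal (t + \<epsilon>)" using \<open>0 < \<epsilon>\<close> by simp
      ultimately have "lower_local_dim \<mu> x < ereal (t + \<epsilon>)" by (blast intro: le_less_trans)
      then show "\<exists>r \<nu>. 0 < r \<and> r < \<rho> \<and> \<nu> \<in> E \<and> ennreal (r powr (t + \<epsilon> + \<epsilon>)) \<le> emeasure \<nu> (ball x r)"
        using dens \<open>\<mu> \<in> \<Delta>\<close> \<open>x \<in> K\<close> that
        by (intro uniform_density_ball_witness[OF prob]) (auto simp: \<rho>\<^sub>0_def)
    qed (use sets_E that \<open>t < s\<close> in \<open>auto simp: \<rho>\<^sub>0_def \<epsilon>_def field_simps\<close>)
    also have "s - (t + \<epsilon> + \<epsilon>) = \<epsilon>" by (simp add: \<epsilon>_def field_simps)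
    finally show ?thesis by (simp add: m ennreal_mult'[symmetric] mult_ac)
  qed
  show ?thesis
    using \<open>0 < \<epsilon>\<close> \<open>0 < \<rho>\<^sub>0\<close> bound by (rule ennreal_eq_0_if_le_powr)
qed

lemma hausdorff_dim_le_of_hausdorff_measure_eq_0:
  assumes "0 \<le> t" and "\<And>s. t < s \<Longrightarrow> hausdorff_measure s A = 0"
  shows "hausdorff_dim A \<le> ereal t"
  unfolding hausdorff_dim_def
proof (rule ereal_le_epsilon2)
  fix e :: real assume "0 < e"
  with assms have "ereal (t + e) \<in> {ereal s | s. 0 \<le> s \<and> hausdorff_measure s A = 0}"
    by auto
  then show "Inf {ereal s | s. 0 \<le> s \<and> hausdorff_measure s A = 0} \<le> ereal t + ereal e"
    by (simp add: Inf_lower)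
qed

theorem propositionp:
  fixes K :: "'a::euclidean_space set" and \<Delta> :: "'a measure set" and t :: real
  assumes "compact K" and "K \<noteq> {}"
    and "uniform_densities K \<Delta>"
    and "\<forall>x\<in>K. \<exists>\<mu>\<in>\<Delta>. lower_local_dim \<mu> x \<le> ereal t"
  shows "hausdorff_dim K \<le> ereal t"
proof (rule hausdorff_dim_le_of_hausdorff_measure_eq_0)
  obtain x \<mu> where "\<mu> \<in> \<Delta>" and local_dim: "lower_local_dim \<mu> x \<le> ereal t"
    using assms(2,4) by blast
  then have "prob_space \<mu>"
    using assms(3) by (auto simp: uniform_densities_def borel_prob_supported_in_def)
  then have "0 \<le> ereal t"
    using lower_local_dim_nonneg local_dim order_trans by blast
  then show "0 \<le> t" by simp
next
  fix s assume "t < s"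
  then show "hausdorff_measure s K = 0"
    using hausdorff_pre_eq_0_above_local_dim[OF assms(1,3,4)] by (simp add: hausdorff_measure_def)
qed

end
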